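(* Let $\lambda$ be a partition of $n\ge0$ with $f^\lambda$ odd, and let $X$ be any $\beta$-set of $\lambda$. Then \[ g(X)=\begin{cases}1-(-1)^n,&|X|\text{ even},\\ (-1)^n,&|X|\text{ odd}.\end{cases} \]
   Context: $f^\lambda$ is the number of standard Young tableaux of shape $\lambda$ ($f^\varnothing=1$). For $\lambda=(\lambda_1\ge\dots\ge\lambda_k>0)$, $H(\lambda):=\{\lambda_i+k-i:1\le i\le k\}$; for finite $Y\subset\mathbb{Z}_{\ge0}$ and $r\ge0$, $Y^{+r}:=\{y+r:y\in Y\}\cup\{0,\dots,r-1\}$. The $\beta$-sets of $\lambda$ are the sets $H(\lambda)^{+r}$, $r\ge0$. For finite $X$, $g(X)$ is the number of even elements of $X$ minus the number of odd elements of $X$. *)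

theory Defs
  imports Main
begin

text \<open>A partition of n: a weakly decreasing list of positive naturals summing to n.
  Parts are indexed from 0, i.e. lam ! (i-1) is the paper's lambda_i.\<close>
definition is_partition :: "nat \<Rightarrow> nat list \<Rightarrow> bool" where
  "is_partition n lam \<longleftrightarrow> sorted_wrt (\<ge>) lam \<and> (\<forall>x\<in>set lam. 0 < x) \<and> sum_list lam = n"

definition young_diagram :: "nat list \<Rightarrow> (nat \<times> nat) set" where
  "young_diagram lam = {(i, j). i < length lam \<and> j < lam ! i}"

definition syt :: "nat list \<Rightarrow> ((nat \<times> nat) \<Rightarrow> nat) set" where
  "syt lam = {T. bij_betw T (young_diagram lam) {1..sum_list lam}
     \<and> (\<forall>c. c \<notin> young_diagram lam \<longrightarrow> T c = 0)
     \<and> (\<forall>i j. (i, j + 1) \<in> young_diagram lam \<longrightarrow> T (i, j) < T (i, j + 1))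
     \<and> (\<forall>i j. (i + 1, j) \<in> young_diagram lam \<longrightarrow> T (i, j) < T (i + 1, j))}"

definition num_syt :: "nat list \<Rightarrow> nat" where
  "num_syt lam = card (syt lam)"

text \<open>H(lam) = {lam_i + k - i : 1 \<le> i \<le> k}, written 0-indexed.\<close>
definition hook_set :: "nat list \<Rightarrow> nat set" where
  "hook_set lam = {lam ! i + (length lam - 1 - i) | i. i < length lam}"

definition shift_set :: "nat set \<Rightarrow> nat \<Rightarrow> nat set" where
  "shift_set Y r = (\<lambda>y. y + r) ` Y \<union> {0..<r}"

definition is_beta_set :: "nat list \<Rightarrow> nat set \<Rightarrow> bool" where
  "is_beta_set lam X \<longleftrightarrow> (\<exists>r. X = shift_set (hook_set lam) r)"

definition g :: "nat set \<Rightarrow> int" where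
  "g X = int (card {x\<in>X. even x}) - int (card {x\<in>X. odd x})"

end

theory Submission
  imports Defs
begin

text \<open>
  For a finite down-closed set of cells \<open>S\<close> with \<open>n\<close> cells, let \<open>c(S)\<close> be the number of cells
  \<open>(i, j)\<close> with \<open>i + j\<close> even minus the number with \<open>i + j\<close> odd. The number of standard fillings
  of \<open>S\<close> is even unless \<open>c(S) \<in> {0, 1}\<close>: fillings in which \<open>n - 1\<close> and \<open>n\<close> are not adjacent are
  paired off by exchanging the two entries, and those in which they fill a domino correspond to
  the fillings of \<open>S\<close> without that domino, which has the same value of \<open>c\<close>. As \<open>c(S) \<equiv> n\<close>
  (mod 2), an odd \<open>f\<^sup>\<lambda>\<close> forces \<open>c(\<lambda>) = n mod 2\<close>.

  Adding the rows of \<open>\<lambda>\<close> one at a time expresses \<open>\<Sum>x\<in>H(\<lambda>). (-1)\<^sup>x\<close> through \<open>c(\<lambda>)\<close> and the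
  number of parts, and passing to \<open>H(\<lambda>)\<^sup>+\<^sup>r\<close> multiplies that sum by \<open>(-1)\<^sup>r\<close> and adds
  \<open>\<Sum>j<r. (-1)\<^sup>j\<close>; this sum is \<open>g\<close>.
\<close>

subsection \<open>Standard tableaux on an arbitrary set of cells\<close>

definition cell_adj :: "nat \<times> nat \<Rightarrow> nat \<times> nat \<Rightarrow> bool" where
  "cell_adj u v \<longleftrightarrow> v = (fst u, snd u + 1) \<or> v = (fst u + 1, snd u)"

definition down_closed :: "(nat \<times> nat) set \<Rightarrow> bool" where
  "down_closed S \<longleftrightarrow> (\<forall>u v. v \<in> S \<longrightarrow> cell_adj u v \<longrightarrow> u \<in> S)"

definition syt_on :: "(nat \<times> nat) set \<Rightarrow> ((nat \<times> nat) \<Rightarrow> nat) set" where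
  "syt_on S = {T. bij_betw T S {1..card S} \<and> (\<forall>c. c \<notin> S \<longrightarrow> T c = 0)
     \<and> (\<forall>u v. v \<in> S \<longrightarrow> cell_adj u v \<longrightarrow> T u < T v)}"

definition checkerboard_sum :: "(nat \<times> nat) set \<Rightarrow> int" where
  "checkerboard_sum S = (\<Sum>(i, j)\<in>S. (-1) ^ (i + j))"

definition top_domino :: "(nat \<times> nat) set \<Rightarrow> (nat \<times> nat \<Rightarrow> nat) \<Rightarrow> nat \<times> nat \<Rightarrow> nat \<times> nat \<Rightarrow> bool" where
  "top_domino S T u v \<longleftrightarrow> u \<in> S \<and> v \<in> S \<and> cell_adj u v \<and> T u = card S - 1 \<and> T v = card S"

lemma cell_adj_irrefl: "\<not> cell_adj u u"
  by (cases u) (auto simp: cell_adj_def)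

lemma cell_adj_asym: "cell_adj u v \<Longrightarrow> \<not> cell_adj v u"
  by (cases u; cases v) (auto simp: cell_adj_def)

lemma cell_adj_diagonal: "cell_adj u v \<Longrightarrow> fst v + snd v = Suc (fst u + snd u)"
  by (auto simp: cell_adj_def)

lemma syt_on_image: "T \<in> syt_on S \<Longrightarrow> T ` S = {1..card S}"
  by (simp add: syt_on_def bij_betw_def)

lemma syt_on_inj: "T \<in> syt_on S \<Longrightarrow> inj_on T S"
  by (simp add: syt_on_def bij_betw_def)

lemma syt_on_outside: "T \<in> syt_on S \<Longrightarrow> c \<notin> S \<Longrightarrow> T c = 0"
  unfolding syt_on_def by blast

lemma syt_on_increasing: "T \<in> syt_on S \<Longrightarrow> v \<in> S \<Longrightarrow> cell_adj u v \<Longrightarrow> T u < T v"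
  unfolding syt_on_def by blast

lemma syt_on_range: "T \<in> syt_on S \<Longrightarrow> c \<in> S \<Longrightarrow> T c \<in> {1..card S}"
  using syt_on_image by blast

lemma syt_on_le_card: "T \<in> syt_on S \<Longrightarrow> T c \<le> card S"
  by (cases "c \<in> S") (auto dest: syt_on_range syt_on_outside)

lemma syt_onI:
  assumes "inj_on T S" "T ` S = {1..card S}" "\<And>c. c \<notin> S \<Longrightarrow> T c = 0"
    and "\<And>u v. v \<in> S \<Longrightarrow> cell_adj u v \<Longrightarrow> T u < T v"
  shows "T \<in> syt_on S"
  using assms by (simp add: syt_on_def bij_betw_def)

lemma finite_syt_on:
  assumes "finite S" shows "finite (syt_on S)"
proof (rule finite_subset)
  show "syt_on S \<subseteq> {T. \<forall>c. (c \<in> S \<longrightarrow> T c \<in> {1..card S}) \<and> (c \<notin> S \<longrightarrow> T c = 0)}"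
    using syt_on_range syt_on_outside by blast
  show "finite {T. \<forall>c. (c \<in> S \<longrightarrow> T c \<in> {1..card S}) \<and> (c \<notin> S \<longrightarrow> T c = (0::nat))}"
    by (rule finite_set_of_finite_funs) (use assms in auto)
qed

lemma even_card_fixpoint_free_involution:
  assumes "finite A"
    and "\<And>x. x \<in> A \<Longrightarrow> f x \<in> A" "\<And>x. x \<in> A \<Longrightarrow> f x \<noteq> x" "\<And>x. x \<in> A \<Longrightarrow> f (f x) = x"
  shows "even (card A)"
  using assms
proof (induction A rule: finite_psubset_induct)
  case (psubset A)
  show ?case
  proof (cases "A = {}")
    case False
    then obtain x where x: "x \<in> A" by blast
    let ?A' = "A - {x, f x}"
    have "even (card ?A')"
    proof (rule psubset.IH)
      show "?A' \<subset> A" using x by blast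
      fix y assume y: "y \<in> ?A'"
      then show "f y \<noteq> y" "f (f y) = y" using psubset.prems(2,3) by auto
      have "f (f y) = y" "f (f x) = x" "y \<noteq> x" "y \<noteq> f x"
        using y x psubset.prems(3) by auto
      then have "f y \<noteq> x" "f y \<noteq> f x" by metis+
      then show "f y \<in> ?A'" using y psubset.prems(1) by blast
    qed
    moreover have "card A = card ?A' + 2"
    proof -
      have pair: "{x, f x} \<subseteq> A" "card {x, f x} = 2"
        using x psubset.prems(1) psubset.prems(2)[OF x] by auto
      then have "card {x, f x} \<le> card A" using card_mono psubset.hyps by metis
      then show ?thesis using pair psubset.hyps by (simp add: card_Diff_subset)
    qed
    ultimately show ?thesis by simp
  qed simp
qed

definition swap_top :: "nat \<Rightarrow> nat \<Rightarrow> nat" where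
  "swap_top n k = (if k = n then n - 1 else if k = n - 1 then n else k)"

lemma swap_top_swap_top [simp]: "swap_top n (swap_top n k) = k"
  by (simp add: swap_top_def)

lemma swap_top_image: "2 \<le> n \<Longrightarrow> swap_top n ` {1..n} = {1..n}"
  by (force simp: swap_top_def image_iff)

lemma swap_top_syt_on:
  assumes T: "T \<in> syt_on S" and n: "2 \<le> card S"
    and no_domino: "\<And>u v. \<not> top_domino S T u v"
  shows "swap_top (card S) \<circ> T \<in> syt_on S"
proof (rule syt_onI)
  let ?\<sigma> = "swap_top (card S)"
  have "inj ?\<sigma>" by (metis injI swap_top_swap_top)
  then show "inj_on (?\<sigma> \<circ> T) S"
    using syt_on_inj[OF T] by (simp add: comp_inj_on inj_on_subset)
  show "(?\<sigma> \<circ> T) ` S = {1..card S}"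
    unfolding image_comp[symmetric] syt_on_image[OF T] using swap_top_image[OF n] .
  show "(?\<sigma> \<circ> T) c = 0" if "c \<notin> S" for c
    using syt_on_outside[OF T that] n by (simp add: swap_top_def)
  show "(?\<sigma> \<circ> T) u < (?\<sigma> \<circ> T) v" if v: "v \<in> S" and uv: "cell_adj u v" for u v
  proof (cases "u \<in> S")
    case True
    have "T u < T v" "T v \<le> card S" using syt_on_increasing[OF T v uv] syt_on_le_card[OF T] by auto
    moreover have "\<not> (T u = card S - 1 \<and> T v = card S)"
      using no_domino[of u v] True v uv by (simp add: top_domino_def)
    ultimately show ?thesis by (auto simp: swap_top_def)
  next
    case False
    then show ?thesis
      using syt_on_outside[OF T False] syt_on_range[OF T v] n by (auto simp: swap_top_def)
  qed
qed

lemma no_top_domino_swap_top: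
  assumes "T \<in> syt_on S" "2 \<le> card S"
  shows "\<not> top_domino S (swap_top (card S) \<circ> T) u v"
proof
  assume "top_domino S (swap_top (card S) \<circ> T) u v"
  then have "T u = card S" "T v = card S - 1" "v \<in> S" "cell_adj u v"
    using assms(2) by (auto simp: top_domino_def swap_top_def split: if_splits)
  then show False using syt_on_increasing[OF assms(1)] by fastforce
qed

lemma even_card_syt_on_no_top_domino:
  assumes "finite S" "2 \<le> card S"
  shows "even (card {T \<in> syt_on S. \<forall>u v. \<not> top_domino S T u v})"
proof (rule even_card_fixpoint_free_involution)
  let ?\<sigma> = "swap_top (card S)"
  show "finite {T \<in> syt_on S. \<forall>u v. \<not> top_domino S T u v}"
    using finite_syt_on[OF assms(1)] by simp
  fix T assume "T \<in> {T \<in> syt_on S. \<forall>u v. \<not> top_domino S T u v}"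
  then have T: "T \<in> syt_on S" "\<And>u v. \<not> top_domino S T u v" by auto
  show "?\<sigma> \<circ> T \<in> {T \<in> syt_on S. \<forall>u v. \<not> top_domino S T u v}"
    using swap_top_syt_on[OF T(1) assms(2) T(2)] no_top_domino_swap_top[OF T(1) assms(2)] by blast
  have "card S \<in> T ` S" using syt_on_image[OF T(1)] assms(2) by simp
  then obtain c where "T c = card S" by (metis imageE)
  then have "(?\<sigma> \<circ> T) c \<noteq> T c" using assms(2) by (simp add: swap_top_def)
  then show "?\<sigma> \<circ> T \<noteq> T" by metis
  show "?\<sigma> \<circ> (?\<sigma> \<circ> T) = T" by (simp add: fun_eq_iff)
qed

lemma card_syt_on_top_domino:
  assumes "finite S"
  shows "card {T \<in> syt_on S. \<exists>u v. top_domino S T u v}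
    = (\<Sum>(u, v)\<in>{(u, v) \<in> S \<times> S. cell_adj u v}. card {T \<in> syt_on S. top_domino S T u v})"
proof -
  let ?P = "{(u, v) \<in> S \<times> S. cell_adj u v}"
  have "{T \<in> syt_on S. \<exists>u v. top_domino S T u v} = (\<Union>(u, v)\<in>?P. {T \<in> syt_on S. top_domino S T u v})"
    by (auto simp: top_domino_def)
  also have "card \<dots> = (\<Sum>p\<in>?P. card (case p of (u, v) \<Rightarrow> {T \<in> syt_on S. top_domino S T u v}))"
  proof (rule card_UN_disjoint)
    show "finite ?P" using assms by (auto intro: finite_subset[of _ "S \<times> S"])
    show "\<forall>p\<in>?P. finite (case p of (u, v) \<Rightarrow> {T \<in> syt_on S. top_domino S T u v})"
      using finite_syt_on[OF assms] by auto
    have "u = u' \<and> v = v'" if "T \<in> syt_on S" "top_domino S T u v" "top_domino S T u' v'" for T u v u' v'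
      using syt_on_inj[OF that(1)] that(2,3) unfolding top_domino_def inj_on_def by metis
    then show "\<forall>p\<in>?P. \<forall>q\<in>?P. p \<noteq> q \<longrightarrow> (case p of (u, v) \<Rightarrow> {T \<in> syt_on S. top_domino S T u v})
        \<inter> (case q of (u, v) \<Rightarrow> {T \<in> syt_on S. top_domino S T u v}) = {}"
      by blast
  qed
  finally show ?thesis by (simp add: case_prod_unfold)
qed

lemma top_domino_isolated:
  assumes T: "T \<in> syt_on S" and uv: "top_domino S T u v"
    and z: "z \<in> S" "cell_adj u z \<or> cell_adj v z"
  shows "z \<in> {u, v}"
proof -
  have "T z \<le> card S" by (rule syt_on_le_card[OF T])
  moreover have "T u < T z \<or> T v < T z" using syt_on_increasing[OF T z(1)] z(2) by blast
  then have "card S - 1 < T z" using uv by (auto simp: top_domino_def)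
  ultimately have "T z = T v" using uv by (simp add: top_domino_def)
  then show ?thesis using syt_on_inj[OF T] z(1) uv by (auto simp: top_domino_def inj_on_def)
qed

lemma syt_on_remove_top_domino:
  assumes T: "T \<in> syt_on S" and uv: "top_domino S T u v" and "finite S"
  shows "T(u := 0, v := 0) \<in> syt_on (S - {u, v})"
proof (rule syt_onI)
  let ?R = "T(u := 0, v := 0)"
  have uv': "u \<in> S" "v \<in> S" "cell_adj u v" "T u = card S - 1" "T v = card S"
    using uv by (auto simp: top_domino_def)
  have "u \<noteq> v" using uv'(3) cell_adj_irrefl by metis
  have card': "card (S - {u, v}) = card S - 2"
    using uv' \<open>u \<noteq> v\<close> assms(3) by (simp add: card_Diff_subset)
  show "inj_on ?R (S - {u, v})"
    using syt_on_inj[OF T] by (auto simp: inj_on_def)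
  have "?R ` (S - {u, v}) = T ` S - T ` {u, v}"
    using inj_on_image_set_diff[OF syt_on_inj[OF T], of S "{u, v}"] uv' by auto
  also have "\<dots> = {1..card (S - {u, v})}"
    using syt_on_image[OF T] uv' \<open>u \<noteq> v\<close> card' by auto
  finally show "?R ` (S - {u, v}) = {1..card (S - {u, v})}" .
  show "?R c = 0" if "c \<notin> S - {u, v}" for c
    using that syt_on_outside[OF T, of c] by auto
  show "?R a < ?R b" if "b \<in> S - {u, v}" "cell_adj a b" for a b
  proof -
    have "T a < T b" "1 \<le> T b" using that syt_on_increasing[OF T] syt_on_range[OF T] by auto
    then show ?thesis using that(1) by auto
  qed
qed

lemma syt_on_add_top_domino:
  assumes "finite S" and uv: "u \<in> S" "v \<in> S" "cell_adj u v"
    and isolated: "\<And>z. z \<in> S \<Longrightarrow> cell_adj u z \<or> cell_adj v z \<Longrightarrow> z \<in> {u, v}"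
    and T: "T \<in> syt_on (S - {u, v})"
  shows "top_domino S (T(u := card S - 1, v := card S)) u v" (is "top_domino S ?E u v")
    and "T(u := card S - 1, v := card S) \<in> syt_on S"
proof -
  have "u \<noteq> v" using uv(3) cell_adj_irrefl by blast
  moreover have "card {u, v} \<le> card S" by (rule card_mono) (use assms(1) uv in auto)
  ultimately have card': "card (S - {u, v}) = card S - 2" "2 \<le> card S"
    using uv assms(1) by (simp_all add: card_Diff_subset)
  show "top_domino S ?E u v" using uv \<open>u \<noteq> v\<close> by (simp add: top_domino_def)
  have low: "T c \<le> card S - 2" for c using syt_on_le_card[OF T] card'(1) by simp
  show "?E \<in> syt_on S"
  proof (rule syt_onI)
    have "?E ` S = T ` (S - {u, v}) \<union> {card S - 1, card S}"
      using uv \<open>u \<noteq> v\<close> by (auto simp: image_iff)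
    also have "\<dots> = {1..card S}"
      using syt_on_image[OF T] card' by auto
    finally show img: "?E ` S = {1..card S}" .
    then show "inj_on ?E S" using assms(1) by (simp add: eq_card_imp_inj_on)
    show "?E c = 0" if "c \<notin> S" for c
      using that uv syt_on_outside[OF T] by auto
    show "?E a < ?E b" if b: "b \<in> S" and ab: "cell_adj a b" for a b
    proof -
      consider "b = v" | "b = u" | "b \<in> S - {u, v}" using b by blast
      then show ?thesis
      proof cases
        case 1
        then show ?thesis using low[of a] card'(2) cell_adj_irrefl[of v] ab by (cases "a = u") auto
      next
        case 2
        then show ?thesis using low[of a] card'(2) cell_adj_irrefl[of u] cell_adj_asym[OF uv(3)] ab
          by (cases "a = v") auto
      next
        case 3
        then have "a \<notin> {u, v}" using isolated ab by blast
        then show ?thesis using syt_on_increasing[OF T 3 ab] 3 by auto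
      qed
    qed
  qed
qed

lemma card_syt_on_top_domino_eq:
  assumes "finite S" and uv: "u \<in> S" "v \<in> S" "cell_adj u v"
    and isolated: "\<And>z. z \<in> S \<Longrightarrow> cell_adj u z \<or> cell_adj v z \<Longrightarrow> z \<in> {u, v}"
  shows "card {T \<in> syt_on S. top_domino S T u v} = card (syt_on (S - {u, v}))"
proof (rule bij_betw_same_card)
  show "bij_betw (\<lambda>T. T(u := 0, v := 0))
      {T \<in> syt_on S. top_domino S T u v} (syt_on (S - {u, v}))"
  proof (rule bij_betw_byWitness[where f' = "\<lambda>T. T(u := card S - 1, v := card S)"])
    show "\<forall>T\<in>{T \<in> syt_on S. top_domino S T u v}.
        T(u := 0, v := 0, u := card S - 1, v := card S) = T"
      by (auto simp: fun_eq_iff top_domino_def)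
    show "\<forall>T\<in>syt_on (S - {u, v}). T(u := card S - 1, v := card S, u := 0, v := 0) = T"
      using syt_on_outside by (fastforce simp: fun_eq_iff)
    show "(\<lambda>T. T(u := 0, v := 0)) ` {T \<in> syt_on S. top_domino S T u v} \<subseteq> syt_on (S - {u, v})"
      using syt_on_remove_top_domino assms(1) by blast
    show "(\<lambda>T. T(u := card S - 1, v := card S)) ` syt_on (S - {u, v}) \<subseteq> {T \<in> syt_on S. top_domino S T u v}"
      using syt_on_add_top_domino[OF assms] by blast
  qed
qed

lemma checkerboard_sum_Diff_domino:
  assumes "finite S" "u \<in> S" "v \<in> S" "cell_adj u v"
  shows "checkerboard_sum (S - {u, v}) = checkerboard_sum S"
proof -
  have "u \<noteq> v" using assms(4) cell_adj_irrefl by metis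
  have "checkerboard_sum S = (-1) ^ (fst u + snd u) + (-1) ^ (fst v + snd v) + checkerboard_sum (S - {u, v})"
  proof -
    have "S = insert u (insert v (S - {u, v}))" using assms(2,3) by blast
    then show ?thesis unfolding checkerboard_sum_def
      by (subst (1) \<open>S = _\<close>, subst sum.insert) (use assms(1) \<open>u \<noteq> v\<close> in \<open>auto simp: case_prod_beta\<close>)
  qed
  then show ?thesis using cell_adj_diagonal[OF assms(4)] by simp
qed

lemma down_closed_Diff_isolated:
  assumes "down_closed S" and isolated: "\<And>z. z \<in> S \<Longrightarrow> cell_adj u z \<or> cell_adj v z \<Longrightarrow> z \<in> {u, v}"
  shows "down_closed (S - {u, v})"
  using assms unfolding down_closed_def by blast

lemma checkerboard_sum_card_le_1:
  assumes "finite S" "down_closed S" "card S \<le> 1"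
  shows "checkerboard_sum S \<in> {0, 1}"
proof (cases "S = {}")
  case False
  then obtain i j where S: "S = {(i, j)}"
    using assms(1,3) by (metis card_0_eq card_1_singletonE le_eq_less_or_eq less_one surj_pair)
  have "(i - 1, j) \<notin> S" if "i \<noteq> 0" using S that by simp
  moreover have "(i, j - 1) \<notin> S" if "j \<noteq> 0" using S that by simp
  moreover have "cell_adj (i - 1, j) (i, j)" if "i \<noteq> 0" using that by (simp add: cell_adj_def)
  moreover have "cell_adj (i, j - 1) (i, j)" if "j \<noteq> 0" using that by (simp add: cell_adj_def)
  ultimately have "i = 0" "j = 0" using assms(2) S unfolding down_closed_def by blast+
  then show ?thesis using S by (simp add: checkerboard_sum_def)
qed (simp add: checkerboard_sum_def)

theorem even_card_syt_on:
  assumes "finite S" "down_closed S" "checkerboard_sum S \<notin> {0, 1}"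
  shows "even (card (syt_on S))"
  using assms
proof (induction "card S" arbitrary: S rule: less_induct)
  case less
  let ?D = "{(u, v) \<in> S \<times> S. cell_adj u v}"
  have two: "2 \<le> card S" using checkerboard_sum_card_le_1 less.prems by fastforce
  have partition: "syt_on S = {T \<in> syt_on S. \<forall>u v. \<not> top_domino S T u v}
      \<union> {T \<in> syt_on S. \<exists>u v. top_domino S T u v}" by blast
  have "card (syt_on S) = card {T \<in> syt_on S. \<forall>u v. \<not> top_domino S T u v}
      + card {T \<in> syt_on S. \<exists>u v. top_domino S T u v}"
    using finite_syt_on[OF less.prems(1)] by (subst partition) (rule card_Un_disjoint; auto)
  moreover have "even (card {T \<in> syt_on S. top_domino S T u v})" if "(u, v) \<in> ?D" for u v
  proof (cases "\<forall>z\<in>S. cell_adj u z \<or> cell_adj v z \<longrightarrow> z \<in> {u, v}")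
    case True
    have "card (S - {u, v}) < card S" using that less.prems(1) by (auto intro: psubset_card_mono)
    moreover have "checkerboard_sum (S - {u, v}) \<notin> {0, 1}"
      using checkerboard_sum_Diff_domino that less.prems(1,3) by auto
    ultimately have "even (card (syt_on (S - {u, v})))"
      using less.hyps less.prems(1) down_closed_Diff_isolated[OF less.prems(2)] True by blast
    moreover have "card {T \<in> syt_on S. top_domino S T u v} = card (syt_on (S - {u, v}))"
      by (rule card_syt_on_top_domino_eq) (use less.prems(1) that True in auto)
    ultimately show ?thesis by simp
  next
    case False
    then have "{T \<in> syt_on S. top_domino S T u v} = {}" using top_domino_isolated by blast
    then show ?thesis by (metis card.empty even_zero)
  qed
  then have "even (card {T \<in> syt_on S. \<exists>u v. top_domino S T u v})"
    unfolding card_syt_on_top_domino[OF less.prems(1)] by (auto intro: dvd_sum)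
  ultimately show ?case using even_card_syt_on_no_top_domino[OF less.prems(1) two] by simp
qed

subsection \<open>Young diagrams\<close>

lemma young_diagram_Nil: "young_diagram [] = {}"
  by (simp add: young_diagram_def)

lemma young_diagram_Cons:
  "young_diagram (a # lam) = (\<lambda>j. (0, j)) ` {..<a} \<union> (\<lambda>(i, j). (Suc i, j)) ` young_diagram lam"
proof (intro set_eqI iffI)
  fix c assume "c \<in> young_diagram (a # lam)"
  then obtain i j where c: "c = (i, j)" "i < Suc (length lam)" "j < (a # lam) ! i"
    unfolding young_diagram_def by auto
  then show "c \<in> (\<lambda>j. (0, j)) ` {..<a} \<union> (\<lambda>(i, j). (Suc i, j)) ` young_diagram lam"
    by (cases i) (auto simp: young_diagram_def image_iff)
qed (auto simp: young_diagram_def)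

lemma finite_young_diagram: "finite (young_diagram lam)"
  by (induction lam) (auto simp: young_diagram_Nil young_diagram_Cons)

lemma young_diagram_Cons_disjoint:
  "(\<lambda>j. (0, j)) ` {..<a} \<inter> (\<lambda>(i, j). (Suc i, j)) ` young_diagram lam = {}"
  by auto

lemma inj_on_Suc_row: "inj_on (\<lambda>(i, j). (Suc i, j)) A"
  by (auto simp: inj_on_def)

lemma card_young_diagram: "card (young_diagram lam) = sum_list lam"
proof (induction lam)
  case (Cons a lam)
  have "card (young_diagram (a # lam))
      = card ((\<lambda>j. (0::nat, j)) ` {..<a}) + card ((\<lambda>(i, j). (Suc i, j)) ` young_diagram lam)"
    unfolding young_diagram_Cons
    by (rule card_Un_disjoint) (use young_diagram_Cons_disjoint finite_young_diagram in auto)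
  also have "\<dots> = a + card (young_diagram lam)"
    using card_image[OF inj_on_Suc_row] by (simp add: card_image inj_on_def)
  finally show ?case using Cons by simp
qed (simp add: young_diagram_Nil)

lemma down_closed_young_diagram:
  assumes "sorted_wrt (\<ge>) lam" shows "down_closed (young_diagram lam)"
  unfolding down_closed_def
proof (intro allI impI)
  fix u v assume v: "v \<in> young_diagram lam" and "cell_adj u v"
  then consider "v = (fst u, snd u + 1)" | "v = (fst u + 1, snd u)" by (auto simp: cell_adj_def)
  then show "u \<in> young_diagram lam"
  proof cases
    case 2
    then have "lam ! (fst u + 1) \<le> lam ! fst u"
      using v sorted_wrt_nth_less[OF assms, of "fst u" "fst u + 1"] by (simp add: young_diagram_def)
    then show ?thesis using v 2 by (auto simp: young_diagram_def)
  qed (use v in \<open>auto simp: young_diagram_def\<close>)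
qed

lemma syt_eq_syt_on_young_diagram: "syt lam = syt_on (young_diagram lam)"
proof -
  have "(\<forall>u v. v \<in> Y \<longrightarrow> cell_adj u v \<longrightarrow> T u < T v)
     \<longleftrightarrow> (\<forall>i j. (i, j + 1) \<in> Y \<longrightarrow> T (i, j) < T (i, j + 1))
       \<and> (\<forall>i j. (i + 1, j) \<in> Y \<longrightarrow> T (i, j) < T (i + 1, j))" for Y and T :: "nat \<times> nat \<Rightarrow> nat"
    by (auto simp: cell_adj_def)
  then show ?thesis unfolding syt_def syt_on_def card_young_diagram by simp
qed

lemma sum_minus_one_power_lessThan: "(\<Sum>j<a. (-1::int) ^ j) = of_bool (odd a)"
  by (induction a) auto

lemma checkerboard_sum_young_diagram_Cons:
  "checkerboard_sum (young_diagram (a # lam)) = of_bool (odd a) - checkerboard_sum (young_diagram lam)"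
proof -
  have "checkerboard_sum (young_diagram (a # lam))
      = checkerboard_sum ((\<lambda>j. (0, j)) ` {..<a}) + checkerboard_sum ((\<lambda>(i, j). (Suc i, j)) ` young_diagram lam)"
    unfolding young_diagram_Cons checkerboard_sum_def
    by (rule sum.union_disjoint) (use young_diagram_Cons_disjoint finite_young_diagram in auto)
  also have "checkerboard_sum ((\<lambda>j. (0, j)) ` {..<a}) = (\<Sum>j<a. (-1) ^ j)"
    unfolding checkerboard_sum_def by (subst sum.reindex) (auto simp: inj_on_def)
  also have "checkerboard_sum ((\<lambda>(i, j). (Suc i, j)) ` young_diagram lam) = - checkerboard_sum (young_diagram lam)"
    unfolding checkerboard_sum_def
    by (subst sum.reindex[OF inj_on_Suc_row]) (auto simp: case_prod_beta sum_negf intro!: sum.cong)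
  finally show ?thesis by (simp add: sum_minus_one_power_lessThan)
qed

lemma even_checkerboard_sum_minus_card:
  assumes "finite S" shows "even (checkerboard_sum S - int (card S))"
proof -
  have "checkerboard_sum S - int (card S) = (\<Sum>(i, j)\<in>S. (-1) ^ (i + j) - 1)"
    by (simp add: checkerboard_sum_def sum_subtractf case_prod_beta)
  also have "even \<dots>" by (rule dvd_sum) (auto simp: minus_one_power_iff)
  finally show ?thesis .
qed

subsection \<open>Beta-sets\<close>

lemma g_eq_sum_minus_one_power:
  assumes "finite X" shows "g X = (\<Sum>x\<in>X. (-1) ^ x)"
proof -
  have "(\<Sum>x\<in>X. (-1::int) ^ x) = (\<Sum>x\<in>{x\<in>X. even x}. (-1) ^ x) + (\<Sum>x\<in>{x\<in>X. odd x}. (-1) ^ x)"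
    using assms by (subst sum.union_disjoint[symmetric]) (auto intro: sum.cong)
  then show ?thesis by (simp add: g_def)
qed

lemma hook_set_Nil: "hook_set [] = {}"
  by (simp add: hook_set_def)

lemma hook_set_Cons: "hook_set (a # lam) = insert (a + length lam) (hook_set lam)"
proof -
  have "hook_set lam = (\<lambda>i. lam ! i + (length lam - 1 - i)) ` {..<length lam}" for lam :: "nat list"
    unfolding hook_set_def by blast
  moreover have "{..<length (a # lam)} = insert 0 (Suc ` {..<length lam})"
    by (auto simp: image_iff less_Suc_eq_0_disj)
  ultimately show ?thesis by (auto simp: image_image)
qed

lemma finite_hook_set: "finite (hook_set lam)"
  by (induction lam) (simp_all add: hook_set_Nil hook_set_Cons)

lemma first_hook_notin_hook_set:
  assumes "sorted_wrt (\<ge>) (a # lam)" shows "a + length lam \<notin> hook_set lam"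
proof
  assume "a + length lam \<in> hook_set lam"
  then obtain i where i: "i < length lam" "a + length lam = lam ! i + (length lam - 1 - i)"
    unfolding hook_set_def by auto
  have "lam ! i \<le> a" using assms i(1) by (simp add: nth_mem)
  then show False using i by linarith
qed

lemma card_hook_set: "sorted_wrt (\<ge>) lam \<Longrightarrow> card (hook_set lam) = length lam"
  by (induction lam) (simp_all add: hook_set_Nil hook_set_Cons finite_hook_set first_hook_notin_hook_set)

lemma sum_minus_one_power_hook_set:
  assumes "sorted_wrt (\<ge>) lam"
  shows "(\<Sum>x\<in>hook_set lam. (-1::int) ^ x)
    = (-1) ^ (length lam + 1) * (of_bool (odd (length lam)) - 2 * checkerboard_sum (young_diagram lam))"
  using assms
proof (induction lam)
  case Nil
  then show ?case by (simp add: hook_set_Nil young_diagram_Nil checkerboard_sum_def)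
next
  case (Cons a lam)
  have "(\<Sum>x\<in>hook_set (a # lam). (-1::int) ^ x) = (-1) ^ (a + length lam) + (\<Sum>x\<in>hook_set lam. (-1) ^ x)"
    using first_hook_notin_hook_set[OF Cons.prems] by (simp add: hook_set_Cons finite_hook_set)
  then show ?case
    using Cons.IH Cons.prems
    by (cases "even a"; cases "even (length lam)")
      (simp_all add: checkerboard_sum_young_diagram_Cons power_add algebra_simps)
qed

lemma finite_shift_set: "finite Y \<Longrightarrow> finite (shift_set Y r)"
  by (simp add: shift_set_def)

lemma card_shift_set: "finite Y \<Longrightarrow> card (shift_set Y r) = card Y + r"
  unfolding shift_set_def by (subst card_Un_disjoint) (auto simp: card_image)

lemma sum_minus_one_power_shift_set:
  assumes "finite Y"
  shows "(\<Sum>x\<in>shift_set Y r. (-1::int) ^ x) = (-1) ^ r * (\<Sum>y\<in>Y. (-1) ^ y) + of_bool (odd r)"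
proof -
  have "(\<Sum>x\<in>shift_set Y r. (-1::int) ^ x) = (\<Sum>x\<in>(\<lambda>y. y + r) ` Y. (-1) ^ x) + (\<Sum>x<r. (-1) ^ x)"
    unfolding shift_set_def atLeast0LessThan using assms by (subst sum.union_disjoint) auto
  also have "(\<Sum>x\<in>(\<lambda>y. y + r) ` Y. (-1::int) ^ x) = (-1) ^ r * (\<Sum>y\<in>Y. (-1) ^ y)"
    by (subst sum.reindex) (auto simp: inj_on_def power_add sum_distrib_left mult.commute)
  finally show ?thesis by (simp add: sum_minus_one_power_lessThan)
qed

lemma checkerboard_sum_young_diagram_if_odd_num_syt:
  assumes "is_partition n lam" "odd (num_syt lam)"
  shows "checkerboard_sum (young_diagram lam) = of_bool (odd n)"
proof -
  have sorted: "sorted_wrt (\<ge>) lam" and card: "card (young_diagram lam) = n"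
    using assms(1) by (auto simp: is_partition_def card_young_diagram)
  have "checkerboard_sum (young_diagram lam) \<in> {0, 1}"
    using even_card_syt_on[OF finite_young_diagram down_closed_young_diagram[OF sorted]] assms(2)
    by (auto simp: num_syt_def syt_eq_syt_on_young_diagram)
  moreover have "even (checkerboard_sum (young_diagram lam) - int n)"
    using even_checkerboard_sum_minus_card[OF finite_young_diagram] card by simp
  ultimately show ?thesis by auto
qed

theorem lemma4p5:
  fixes n :: nat and lam :: "nat list" and X :: "nat set"
  assumes "is_partition n lam"
    and "odd (num_syt lam)"
    and "is_beta_set lam X"
  shows "g X = (if even (card X) then 1 - (-1) ^ n else (-1) ^ n)"
proof -
  obtain r where X: "X = shift_set (hook_set lam) r"
    using assms(3) unfolding is_beta_set_def by blast
  have sorted: "sorted_wrt (\<ge>) lam" using assms(1) by (simp add: is_partition_def)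
  have "card X = length lam + r"
    using X card_shift_set[OF finite_hook_set] card_hook_set[OF sorted] by simp
  moreover have "g X = (-1) ^ r * ((-1) ^ (length lam + 1) * (of_bool (odd (length lam)) - 2 * of_bool (odd n)))
      + of_bool (odd r)"
    using g_eq_sum_minus_one_power[OF finite_shift_set[OF finite_hook_set]]
      sum_minus_one_power_shift_set[OF finite_hook_set] sum_minus_one_power_hook_set[OF sorted]
      checkerboard_sum_young_diagram_if_odd_num_syt[OF assms(1,2)] X
    by simp
  ultimately show ?thesis by (simp add: power_add minus_one_power_iff)
qed

end
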